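(* For all $\lambda,\mu>0$ and $f\in C(S_{\mathrm u})$, \[ (\lambda-\mu)\,u(R^{\mathrm{co}}_\lambda f,\mu)=u(f,\mu)-u(f,\lambda). \] Equivalently, for every $(i,j)\in\mathcal{IJ}$, \[ \int_{S_{\mathrm u}}(\lambda-\mu)R^{\mathrm{co}}_\mu R^{\mathrm{co}}_\lambda f\,\mathrm d\mathfrak p_{i,j}=\int_{S_{\mathrm u}}R^{\mathrm{co}}_\mu f\,\mathrm d\mathfrak p_{i,j}-\int_{S_{\mathrm u}}R^{\mathrm{co}}_\lambda f\,\mathrm d\mathfrak p_{i,j}. \]
   Context: Let $S_1,\dots,S_N$ be disjoint compact metrizable separable spaces and $A_i$ generators of Feller semigroups (positive contraction semigroups, not necessarily conservative) on $C(S_i)$ with resolvents $R_{\lambda,i}=(\lambda-A_i)^{-1}$. Assume $A_1,\dots,A_M$ ($1\le M\le N$) are not conservative and $A_{M+1},\dots,A_N$ are conservative. For $i\in\mathcal M=\{1,\dots,M\}$, assume the kernel of $A_i$ is trivial and there are continuous functions $\phi^{i,j}$, $j=1,\dots,\kappa(i)$, with $0\le\phi^{i,j}\le 1_{S_i}$, $\lambda R_{\lambda,i}\phi^{i,j}\le\phi^{i,j}$ for all $\lambda>0$, $\lambda R_{\lambda,i}\phi^{i,j}\neq\phi^{i,j}$, and $\sum_{j=1}^{\kappa(i)}\phi^{i,j}=1_{S_i}$. Let $\ell^{i,j}_\lambda=\phi^{i,j}-\lambda R_{\lambda,i}\phi^{i,j}$ (Laplace transforms of exit laws), and $\mathcal{IJ}=\{(i,j):i\in\mathcal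 M,\ 1\le j\le\kappa(i)\}$, $\kappa=\sum_{i\in\mathcal M}\kappa(i)$. Let $S_{\mathrm u}$ be the disjoint union of the $S_i$; functions on $S_i$ are extended by zero to $S_{\mathrm u}$, and $f_i=f1_{S_i}$. Define $R^{\mathrm{du}}_\lambda f=\sum_{i=1}^N R_{\lambda,i}f_i$. Let $\mathfrak p_{i,j}$, $(i,j)\in\mathcal{IJ}$, be Borel sub-probability measures on $S_{\mathrm u}$. Let $N_\lambda:\mathbb R^\kappa\to\mathbb R^\kappa$, $(N_\lambda w)_{i,j}=\sum_{k\in\mathcal M}\sum_{l=1}^{\kappa(k)}w_{k,l}\int_{S_k}\ell^{k,l}_\lambda\,\mathrm d\mathfrak p_{i,j}$; then $\|N_\lambda\|<1$ (max norm) and $M_\lambda=I-N_\lambda$ is invertible. For $f\in C(S_{\mathrm u})$ set $v(f,\lambda)=\big(\int_{S_{\mathrm u}}R^{\mathrm{du}}_\lambda f\,\mathrm d\mathfrak p_{i,j}\big)_{(i,j)\in\mathcal{IJ}}$, $u(f,\lambda)=M_\lambda^{-1}v(f,\lambda)$, and \[ R^{\mathrm{co}}_\lambda f=R^{\mathrm{du}}_\lambda f+\sum_{i\in\mathcal M}\sum_{j=1}^{\kappa(i)}u_{i,j}(f,\lambda)\,\ell^{i,j}_\lambda. \] It holds that $u_{i,j}(f,\lambda)=\int_{S_{\mathrm u}}R^{\mathrm{co}}_\lambda f\,\mathrm d\mathfrak p_{i,j}$. *)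

theory Defs
  imports "HOL-Probability.Probability"
begin

(* C(S) for a (clopen) piece S of the disjoint union, functions extended by zero *)
definition Cfun :: "'a::topological_space set \<Rightarrow> ('a \<Rightarrow> real) set" where
  "Cfun S = {f. continuous_on S f \<and> (\<forall>x. x \<notin> S \<longrightarrow> f x = 0)}"

definition restr :: "'a set \<Rightarrow> ('a \<Rightarrow> real) \<Rightarrow> 'a \<Rightarrow> real" where
  "restr S f = (\<lambda>x. if x \<in> S then f x else 0)"

(* R lam = (lam - A)^{-1}, lam > 0, is the resolvent of the generator of a Feller
   (positive, strongly continuous, contraction, not necessarily conservative)
   semigroup on C(S)  (Hille--Yosida characterisation) *)
definition feller_resolvent :: "'a::topological_space set \<Rightarrow> (real \<Rightarrow> ('a \<Rightarrow> real) \<Rightarrow> 'a \<Rightarrow> real) \<Rightarrow> bool" where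
  "feller_resolvent S R \<longleftrightarrow>
     (\<forall>lam>0. \<forall>f\<in>Cfun S. R lam f \<in> Cfun S) \<and>
     (\<forall>lam>0. \<forall>f\<in>Cfun S. \<forall>g\<in>Cfun S. \<forall>a b::real.
         R lam (\<lambda>x. a * f x + b * g x) = (\<lambda>x. a * R lam f x + b * R lam g x)) \<and>
     (\<forall>lam>0. \<forall>f\<in>Cfun S. (\<forall>x. 0 \<le> f x) \<longrightarrow> (\<forall>x. 0 \<le> R lam f x)) \<and>
     (\<forall>lam>0. \<forall>x. lam * R lam (indicator S) x \<le> 1) \<and>
     (\<forall>lam>0. \<forall>mu>0. \<forall>f\<in>Cfun S.
         (\<lambda>x. R lam f x - R mu f x) = (\<lambda>x. (mu - lam) * R lam (R mu f) x)) \<and>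
     (\<forall>f\<in>Cfun S. uniform_limit S (\<lambda>t x. t * R t f x) f at_top)"

(* graph of the generator A determined by the resolvent: A (R lam g) = lam R lam g - g *)
definition generator :: "'a::topological_space set \<Rightarrow> (real \<Rightarrow> ('a \<Rightarrow> real) \<Rightarrow> 'a \<Rightarrow> real) \<Rightarrow> (('a \<Rightarrow> real) \<times> ('a \<Rightarrow> real)) set" where
  "generator S R = {(h, k). \<exists>lam>0. \<exists>g\<in>Cfun S. h = R lam g \<and> k = (\<lambda>x. lam * h x - g x)}"

definition trivial_kernel :: "'a::topological_space set \<Rightarrow> (real \<Rightarrow> ('a \<Rightarrow> real) \<Rightarrow> 'a \<Rightarrow> real) \<Rightarrow> bool" where
  "trivial_kernel S R \<longleftrightarrow>
     (\<forall>(h, k)\<in>generator S R. (\<forall>x\<in>S. k x = 0) \<longrightarrow> (\<forall>x\<in>S. h x = 0))"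

definition conservative :: "'a set \<Rightarrow> (real \<Rightarrow> ('a \<Rightarrow> real) \<Rightarrow> 'a \<Rightarrow> real) \<Rightarrow> bool" where
  "conservative S R \<longleftrightarrow> (\<forall>lam>0. \<forall>x\<in>S. lam * R lam (indicator S) x = 1)"

definition IJ :: "nat \<Rightarrow> (nat \<Rightarrow> nat) \<Rightarrow> (nat \<times> nat) set" where
  "IJ M \<kappa> = Sigma {1..M} (\<lambda>i. {1..\<kappa> i})"

definition ell :: "(nat \<Rightarrow> real \<Rightarrow> ('a \<Rightarrow> real) \<Rightarrow> 'a \<Rightarrow> real) \<Rightarrow> (nat \<Rightarrow> nat \<Rightarrow> 'a \<Rightarrow> real)
                   \<Rightarrow> nat \<Rightarrow> nat \<Rightarrow> real \<Rightarrow> 'a \<Rightarrow> real" where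
  "ell R phi i j lam = (\<lambda>x. phi i j x - lam * R i lam (phi i j) x)"

definition Rdu :: "(nat \<Rightarrow> 'a set) \<Rightarrow> nat \<Rightarrow> (nat \<Rightarrow> real \<Rightarrow> ('a \<Rightarrow> real) \<Rightarrow> 'a \<Rightarrow> real)
                   \<Rightarrow> real \<Rightarrow> ('a \<Rightarrow> real) \<Rightarrow> 'a \<Rightarrow> real" where
  "Rdu S N R lam f = (\<lambda>x. \<Sum>i\<in>{1..N}. R i lam (restr (S i) f) x)"

definition Nop :: "(nat \<Rightarrow> 'a set) \<Rightarrow> nat \<Rightarrow> (nat \<Rightarrow> nat) \<Rightarrow> (nat \<Rightarrow> real \<Rightarrow> ('a \<Rightarrow> real) \<Rightarrow> 'a \<Rightarrow> real)
     \<Rightarrow> (nat \<Rightarrow> nat \<Rightarrow> 'a \<Rightarrow> real) \<Rightarrow> (nat \<times> nat \<Rightarrow> 'a measure) \<Rightarrow> real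
     \<Rightarrow> (nat \<times> nat \<Rightarrow> real) \<Rightarrow> nat \<times> nat \<Rightarrow> real" where
  "Nop S M \<kappa> R phi p lam w = (\<lambda>ij. \<Sum>kl\<in>IJ M \<kappa>.
      w kl * set_lebesgue_integral (p ij) (S (fst kl)) (ell R phi (fst kl) (snd kl) lam))"

definition vvec :: "(nat \<Rightarrow> 'a set) \<Rightarrow> nat \<Rightarrow> nat \<Rightarrow> (nat \<Rightarrow> nat) \<Rightarrow> (nat \<Rightarrow> real \<Rightarrow> ('a \<Rightarrow> real) \<Rightarrow> 'a \<Rightarrow> real)
     \<Rightarrow> (nat \<times> nat \<Rightarrow> 'a measure) \<Rightarrow> ('a \<Rightarrow> real) \<Rightarrow> real \<Rightarrow> nat \<times> nat \<Rightarrow> real" where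
  "vvec S N M \<kappa> R p f lam = (\<lambda>ij. integral\<^sup>L (p ij) (Rdu S N R lam f))"

(* u(f,lam) = M_lam^{-1} v(f,lam), M_lam = I - N_lam, as the unique vector on IJ
   solving  w - N_lam w = v(f,lam) *)
definition uvec :: "(nat \<Rightarrow> 'a set) \<Rightarrow> nat \<Rightarrow> nat \<Rightarrow> (nat \<Rightarrow> nat) \<Rightarrow> (nat \<Rightarrow> real \<Rightarrow> ('a \<Rightarrow> real) \<Rightarrow> 'a \<Rightarrow> real)
     \<Rightarrow> (nat \<Rightarrow> nat \<Rightarrow> 'a \<Rightarrow> real) \<Rightarrow> (nat \<times> nat \<Rightarrow> 'a measure) \<Rightarrow> ('a \<Rightarrow> real) \<Rightarrow> real
     \<Rightarrow> nat \<times> nat \<Rightarrow> real" where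
  "uvec S N M \<kappa> R phi p f lam = (THE w. w \<in> extensional (IJ M \<kappa>) \<and>
      (\<forall>ij\<in>IJ M \<kappa>. w ij - Nop S M \<kappa> R phi p lam w ij = vvec S N M \<kappa> R p f lam ij))"

definition Rco :: "(nat \<Rightarrow> 'a set) \<Rightarrow> nat \<Rightarrow> nat \<Rightarrow> (nat \<Rightarrow> nat) \<Rightarrow> (nat \<Rightarrow> real \<Rightarrow> ('a \<Rightarrow> real) \<Rightarrow> 'a \<Rightarrow> real)
     \<Rightarrow> (nat \<Rightarrow> nat \<Rightarrow> 'a \<Rightarrow> real) \<Rightarrow> (nat \<times> nat \<Rightarrow> 'a measure) \<Rightarrow> real \<Rightarrow> ('a \<Rightarrow> real) \<Rightarrow> 'a \<Rightarrow> real" where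
  "Rco S N M \<kappa> R phi p lam f = (\<lambda>x. Rdu S N R lam f x +
      (\<Sum>ij\<in>IJ M \<kappa>. uvec S N M \<kappa> R phi p f lam ij * ell R phi (fst ij) (snd ij) lam x))"

end

theory Submission
  imports Defs
begin

(* Both sides of the identity solve the same linear system w - N_mu w = (lam - mu) v(R^co_lam f, mu).
   Being assembled piecewise from the R_i, R^du satisfies the resolvent equation, and the exit laws
   satisfy (lam - mu) R_mu l_lam = l_mu - l_lam; hence
     (lam - mu) R^du_mu R^co_lam f = R^du_mu f - R^du_lam f + sum_kl u_kl(f,lam) (l^kl_mu - l^kl_lam),
   and integrating against p_ij shows that u(f,mu) - u(f,lam) solves the system.
   Its solution is unique since the rows of N_mu have absolute sum at most
   max_x sum_kl l^kl_mu(x) = max_x (1 - mu R_mu 1(x)) < 1: the space is compact and R_mu 1 > 0,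
   because R_t 1(x) = 0 for one t would, by positivity and the resolvent equation, force it for all t,
   contradicting t R_t 1 -> 1. *)

lemma abs_sum_mult_le_row_bound:
  fixes x a :: "'i \<Rightarrow> real"
  assumes "\<forall>k\<in>I. \<bar>x k\<bar> \<le> B" and "(\<Sum>k\<in>I. \<bar>a k\<bar>) \<le> c" and "0 \<le> B"
  shows "\<bar>\<Sum>k\<in>I. x k * a k\<bar> \<le> B * c"
proof -
  have "\<bar>\<Sum>k\<in>I. x k * a k\<bar> \<le> (\<Sum>k\<in>I. \<bar>x k\<bar> * \<bar>a k\<bar>)"
    using sum_abs[of "\<lambda>k. x k * a k" I] by (simp add: abs_mult)
  also have "\<dots> \<le> (\<Sum>k\<in>I. B * \<bar>a k\<bar>)"
    using assms(1) by (intro sum_mono mult_right_mono) auto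
  also have "\<dots> \<le> B * c"
    using assms(2,3) by (simp add: sum_distrib_left[symmetric] mult_left_mono)
  finally show ?thesis .
qed

lemma contraction_system_homogeneous:
  fixes a :: "'i \<Rightarrow> 'i \<Rightarrow> real"
  assumes "finite I" and "c < 1"
    and row_sum: "\<forall>i\<in>I. (\<Sum>k\<in>I. \<bar>a i k\<bar>) \<le> c"
    and hom: "\<forall>i\<in>I. d i = (\<Sum>k\<in>I. d k * a i k)"
    and "i \<in> I"
  shows "d i = 0"
proof -
  define B where "B = Max ((\<lambda>k. \<bar>d k\<bar>) ` I)"
  have le_B: "\<forall>k\<in>I. \<bar>d k\<bar> \<le> B"
    unfolding B_def using \<open>finite I\<close> by simp
  then have "0 \<le> B" using \<open>i \<in> I\<close> by force
  have "\<forall>k\<in>I. \<bar>d k\<bar> \<le> B * c"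
  proof
    fix k assume "k \<in> I"
    then have "d k = (\<Sum>j\<in>I. d j * a k j)" using hom by blast
    also have "\<bar>\<dots>\<bar> \<le> B * c"
      using abs_sum_mult_le_row_bound[OF le_B _ \<open>0 \<le> B\<close>] row_sum \<open>k \<in> I\<close> by blast
    finally show "\<bar>d k\<bar> \<le> B * c" .
  qed
  then have "B \<le> B * c"
    unfolding B_def using \<open>finite I\<close> \<open>i \<in> I\<close> by (subst Max_le_iff) auto
  then have "B = 0" using \<open>0 \<le> B\<close> \<open>c < 1\<close> by (smt (verit) mult_le_cancel_left1)
  then show ?thesis using le_B \<open>i \<in> I\<close> by fastforce
qed

lemma contraction_system_unique:
  fixes a :: "'i \<Rightarrow> 'i \<Rightarrow> real"
  assumes "finite I" and "c < 1"
    and row_sum: "\<forall>i\<in>I. (\<Sum>k\<in>I. \<bar>a i k\<bar>) \<le> c"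
    and w: "\<forall>i\<in>I. w i - (\<Sum>k\<in>I. w k * a i k) = V i"
    and w': "\<forall>i\<in>I. w' i - (\<Sum>k\<in>I. w' k * a i k) = V i"
    and "i \<in> I"
  shows "w i = w' i"
proof -
  have "\<forall>i\<in>I. w i - w' i = (\<Sum>k\<in>I. (w k - w' k) * a i k)"
  proof
    fix i assume "i \<in> I"
    with w w' show "w i - w' i = (\<Sum>k\<in>I. (w k - w' k) * a i k)"
      unfolding left_diff_distrib sum_subtractf by fastforce
  qed
  from contraction_system_homogeneous[OF assms(1-3) this \<open>i \<in> I\<close>] show ?thesis
    by simp
qed

lemma contraction_iterates_bound:
  fixes a :: "'i \<Rightarrow> 'i \<Rightarrow> real"
  assumes row_sum: "\<forall>i\<in>I. (\<Sum>k\<in>I. \<bar>a i k\<bar>) \<le> c" and "0 \<le> c" and "0 \<le> B"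
    and start: "\<forall>i\<in>I. \<bar>D 0 i\<bar> \<le> B"
    and step: "\<And>n i. D (Suc n) i = (\<Sum>k\<in>I. D n k * a i k)"
  shows "\<forall>i\<in>I. \<bar>D n i\<bar> \<le> c ^ n * B"
proof (induction n)
  case 0
  then show ?case using start by simp
next
  case (Suc n)
  show ?case
  proof
    fix i assume "i \<in> I"
    have "\<bar>\<Sum>k\<in>I. D n k * a i k\<bar> \<le> c ^ n * B * c"
      using abs_sum_mult_le_row_bound[OF Suc.IH row_sum[rule_format, OF \<open>i \<in> I\<close>]]
        \<open>0 \<le> c\<close> \<open>0 \<le> B\<close> by simp
    then show "\<bar>D (Suc n) i\<bar> \<le> c ^ Suc n * B"
      by (simp add: step algebra_simps)
  qed
qed

lemma contraction_system_solvable: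
  fixes a :: "'i \<Rightarrow> 'i \<Rightarrow> real"
  assumes "finite I" and "0 \<le> c" and "c < 1"
    and row_sum: "\<forall>i\<in>I. (\<Sum>k\<in>I. \<bar>a i k\<bar>) \<le> c"
  obtains w where "\<forall>i\<in>I. w i - (\<Sum>k\<in>I. w k * a i k) = V i"
proof -
  define T where "T w = (\<lambda>i. V i + (\<Sum>k\<in>I. w k * a i k))" for w :: "'i \<Rightarrow> real"
  define W where "W n = (T ^^ n) (\<lambda>_. 0)" for n
  define D where "D n i = W (Suc n) i - W n i" for n i
  have W_0: "W 0 = (\<lambda>_. 0)" and W_Suc: "W (Suc n) = T (W n)" for n
    by (simp_all add: W_def)
  have D_bound: "\<forall>i\<in>I. \<bar>D n i\<bar> \<le> c ^ n * (\<Sum>k\<in>I. \<bar>V k\<bar>)" for n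
  proof (rule contraction_iterates_bound[OF row_sum \<open>0 \<le> c\<close>])
    show "\<forall>i\<in>I. \<bar>D 0 i\<bar> \<le> (\<Sum>k\<in>I. \<bar>V k\<bar>)"
      using \<open>finite I\<close> by (auto simp: D_def W_0 W_Suc T_def intro: member_le_sum)
    show "D (Suc n) i = (\<Sum>k\<in>I. D n k * a i k)" for n i
      by (simp add: D_def W_Suc T_def sum_subtractf left_diff_distrib)
  qed (simp add: sum_nonneg)
  have summable_D: "summable (\<lambda>n. D n i)" if "i \<in> I" for i
  proof (rule summable_comparison_test')
    show "summable (\<lambda>n. c ^ n * (\<Sum>k\<in>I. \<bar>V k\<bar>))"
      using \<open>0 \<le> c\<close> \<open>c < 1\<close> by (intro summable_mult2 summable_geometric) simp
    show "norm (D n i) \<le> c ^ n * (\<Sum>k\<in>I. \<bar>V k\<bar>)" for n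
      using D_bound that by simp
  qed
  define L where "L i = (\<Sum>n. D n i)" for i
  have W_lim: "(\<lambda>n. W n i) \<longlonglongrightarrow> L i" if "i \<in> I" for i
  proof -
    have "(\<lambda>n. \<Sum>m<n. D m i) \<longlonglongrightarrow> L i"
      unfolding L_def by (rule summable_LIMSEQ[OF summable_D[OF that]])
    moreover have "(\<Sum>m<n. D m i) = W n i" for n
      using sum_lessThan_telescope[of "\<lambda>m. W m i" n] by (simp add: D_def W_0)
    ultimately show ?thesis by simp
  qed
  have "L i = V i + (\<Sum>k\<in>I. L k * a i k)" if "i \<in> I" for i
  proof (rule LIMSEQ_unique)
    show "(\<lambda>n. W (Suc n) i) \<longlonglongrightarrow> L i"
      by (rule LIMSEQ_Suc[OF W_lim[OF that]])
    show "(\<lambda>n. W (Suc n) i) \<longlonglongrightarrow> V i + (\<Sum>k\<in>I. L k * a i k)"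
      unfolding W_Suc T_def by (intro tendsto_intros W_lim)
  qed
  then show ?thesis by (intro that[of L]) auto
qed

lemma Cfun_vanishes_outside: "g \<in> Cfun S \<Longrightarrow> x \<notin> S \<Longrightarrow> g x = 0"
  unfolding Cfun_def by blast

lemma Cfun_lincomb:
  assumes "f \<in> Cfun S" and "g \<in> Cfun S"
  shows "(\<lambda>x. a * f x + b * g x) \<in> Cfun S"
  using assms unfolding Cfun_def by (auto intro!: continuous_intros)

lemma Cfun_sum:
  assumes "\<forall>k\<in>A. g k \<in> Cfun S"
  shows "(\<lambda>x. \<Sum>k\<in>A. c k * g k x) \<in> Cfun S"
  using assms unfolding Cfun_def by (auto intro!: continuous_intros)

lemma Cfun_restr:
  assumes "continuous_on S g"
  shows "restr S g \<in> Cfun S"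
proof -
  have "continuous_on S (restr S g)"
    using assms by (rule continuous_on_eq) (simp add: restr_def)
  then show ?thesis unfolding Cfun_def restr_def by simp
qed

lemma Cfun_indicator: "indicator S \<in> Cfun S"
proof -
  have "continuous_on S (indicator S :: _ \<Rightarrow> real)"
    by (rule continuous_on_eq[of S "\<lambda>_. 1"]) auto
  then show ?thesis unfolding Cfun_def by simp
qed

lemma Cfun_continuous_on_UNIV:
  assumes "g \<in> Cfun S" and "open S" and "closed S"
  shows "continuous_on UNIV g"
proof -
  have "continuous_on (- S) g"
    by (rule continuous_on_eq[of _ "\<lambda>_. 0"]) (use assms(1) in \<open>auto simp: Cfun_def\<close>)
  then have "continuous_on (S \<union> - S) g"
    using assms by (intro continuous_on_closed_Un) (auto simp: Cfun_def)
  then show ?thesis by simp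
qed

lemma restr_Cfun: "g \<in> Cfun S \<Longrightarrow> restr S g = g"
  by (auto simp: restr_def fun_eq_iff Cfun_vanishes_outside)

lemma restr_Cfun_disjoint: "g \<in> Cfun T \<Longrightarrow> S \<inter> T = {} \<Longrightarrow> restr S g = (\<lambda>_. 0)"
  using Cfun_vanishes_outside[of g T] by (auto simp: restr_def fun_eq_iff)

lemma restr_sum: "restr S (\<lambda>x. \<Sum>a\<in>A. f a x) = (\<lambda>x. \<Sum>a\<in>A. restr S (f a) x)"
  by (simp add: restr_def fun_eq_iff)

lemma restr_add: "restr S (\<lambda>x. f x + g x) = (\<lambda>x. restr S f x + restr S g x)"
  by (simp add: restr_def fun_eq_iff)

lemma restr_mult: "restr S (\<lambda>x. c * f x) = (\<lambda>x. c * restr S f x)"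
  by (simp add: restr_def fun_eq_iff)

context
  fixes S :: "'a::topological_space set" and R :: "real \<Rightarrow> ('a \<Rightarrow> real) \<Rightarrow> 'a \<Rightarrow> real"
  assumes feller: "feller_resolvent S R"
begin

lemma feller_resolvent_Cfun: "t > 0 \<Longrightarrow> f \<in> Cfun S \<Longrightarrow> R t f \<in> Cfun S"
  using feller unfolding feller_resolvent_def by (elim conjE) simp

lemma feller_resolvent_lincomb:
  "t > 0 \<Longrightarrow> f \<in> Cfun S \<Longrightarrow> g \<in> Cfun S \<Longrightarrow>
   R t (\<lambda>x. a * f x + b * g x) = (\<lambda>x. a * R t f x + b * R t g x)"
  using feller unfolding feller_resolvent_def by (elim conjE) simp

lemma feller_resolvent_nonneg:
  "t > 0 \<Longrightarrow> f \<in> Cfun S \<Longrightarrow> (\<forall>x. 0 \<le> f x) \<Longrightarrow> 0 \<le> R t f x"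
  using feller unfolding feller_resolvent_def by (elim conjE) simp

lemma feller_resolvent_indicator_le: "t > 0 \<Longrightarrow> t * R t (indicator S) x \<le> 1"
  using feller unfolding feller_resolvent_def by (elim conjE) simp

lemma feller_resolvent_equation:
  "t > 0 \<Longrightarrow> s > 0 \<Longrightarrow> f \<in> Cfun S \<Longrightarrow> R t f x - R s f x = (s - t) * R t (R s f) x"
  using feller unfolding feller_resolvent_def by (elim conjE) (simp add: fun_eq_iff)

lemma feller_resolvent_approx: "f \<in> Cfun S \<Longrightarrow> uniform_limit S (\<lambda>t x. t * R t f x) f at_top"
  using feller unfolding feller_resolvent_def by (elim conjE) simp

lemma feller_resolvent_exit_law:
  assumes "t > 0" and "s > 0" and h: "h \<in> Cfun S"
  shows "(t - s) * R s (\<lambda>y. h y - t * R t h y) x = (h x - s * R s h x) - (h x - t * R t h x)"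
proof -
  have Rh: "R t h \<in> Cfun S" by (rule feller_resolvent_Cfun[OF \<open>t > 0\<close> h])
  have lin: "R s (\<lambda>y. h y - t * R t h y) x = R s h x - t * R s (R t h) x"
    using feller_resolvent_lincomb[OF \<open>s > 0\<close> h Rh, of 1 "- t"] by simp
  have res: "(t - s) * R s (R t h) x = R s h x - R t h x"
    using feller_resolvent_equation[OF \<open>s > 0\<close> \<open>t > 0\<close> h, of x] by simp
  have "(t - s) * R s (\<lambda>y. h y - t * R t h y) x = (t - s) * R s h x - t * ((t - s) * R s (R t h) x)"
    unfolding lin by (simp add: algebra_simps)
  also have "\<dots> = (h x - s * R s h x) - (h x - t * R t h x)"
    unfolding res by (simp add: algebra_simps)
  finally show ?thesis .
qed

lemma feller_resolvent_zero: "t > 0 \<Longrightarrow> R t (\<lambda>_. 0) = (\<lambda>_. 0)"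
  using feller_resolvent_lincomb[of t "\<lambda>_. 0" "\<lambda>_. 0" 0 0] by (simp add: Cfun_def)

lemma feller_resolvent_sum:
  assumes "t > 0" and "finite A" and "\<forall>k\<in>A. g k \<in> Cfun S"
  shows "R t (\<lambda>x. \<Sum>k\<in>A. c k * g k x) = (\<lambda>x. \<Sum>k\<in>A. c k * R t (g k) x)"
  using assms(2,3)
proof (induction A rule: finite_induct)
  case empty
  then show ?case using feller_resolvent_zero[OF \<open>t > 0\<close>] by simp
next
  case (insert k A)
  then show ?case
    using feller_resolvent_lincomb[OF \<open>t > 0\<close> _ Cfun_sum, of "g k" A g "c k" 1 c] by simp
qed

lemma feller_resolvent_indicator_vanishes:
  assumes "t > 0" and "s > 0" and zero: "R t (indicator S) x = 0"
  shows "R s (indicator S) x = 0"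
proof -
  let ?g = "R s (indicator S)"
  have g: "?g \<in> Cfun S" by (rule feller_resolvent_Cfun[OF \<open>s > 0\<close> Cfun_indicator])
  have "?g y \<le> 1 / s * indicator S y" for y
    using feller_resolvent_indicator_le[OF \<open>s > 0\<close>, of y] Cfun_vanishes_outside[OF g, of y] \<open>s > 0\<close>
    by (cases "y \<in> S") (auto simp: field_simps)
  then have "0 \<le> R t (\<lambda>y. 1 / s * indicator S y + (- 1) * ?g y) x"
    by (intro feller_resolvent_nonneg[OF \<open>t > 0\<close> Cfun_lincomb[OF Cfun_indicator g]]) auto
  also have "\<dots> = - R t ?g x"
    using feller_resolvent_lincomb[OF \<open>t > 0\<close> Cfun_indicator g, of "1 / s" "- 1"] zero by simp
  finally have "R t ?g x = 0"
    using feller_resolvent_nonneg[OF \<open>t > 0\<close> g] feller_resolvent_nonneg[OF \<open>s > 0\<close> Cfun_indicator]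
    by (simp add: order_antisym)
  then show ?thesis
    using feller_resolvent_equation[OF \<open>t > 0\<close> \<open>s > 0\<close> Cfun_indicator, of x] zero by simp
qed

lemma feller_resolvent_indicator_pos:
  assumes "x \<in> S" and "t > 0"
  shows "R t (indicator S) x > 0"
proof (rule ccontr)
  assume "\<not> R t (indicator S) x > 0"
  then have "R t (indicator S) x = 0"
    using feller_resolvent_nonneg[OF \<open>t > 0\<close> Cfun_indicator] by (simp add: order_antisym)
  then have vanish: "R s (indicator S) x = 0" if "s > 0" for s
    using feller_resolvent_indicator_vanishes[OF \<open>t > 0\<close> that] by simp
  have "((\<lambda>s. s * R s (indicator S) x) \<longlongrightarrow> 1) at_top"
    using tendsto_uniform_limitI[OF feller_resolvent_approx[OF Cfun_indicator] \<open>x \<in> S\<close>] \<open>x \<in> S\<close>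
    by simp
  moreover have "\<forall>\<^sub>F s in at_top. s * R s (indicator S) x = 0"
    using eventually_gt_at_top[of 0] by (rule eventually_mono) (simp add: vanish)
  ultimately have "((\<lambda>_::real. 0::real) \<longlongrightarrow> 1) at_top"
    by (rule Lim_transform_eventually)
  then show False by (simp add: tendsto_const_iff)
qed

end

locale resolvent_concatenation =
  fixes S :: "nat \<Rightarrow> 'a::metric_space set" and N M :: nat
    and R :: "nat \<Rightarrow> real \<Rightarrow> ('a \<Rightarrow> real) \<Rightarrow> 'a \<Rightarrow> real"
    and \<kappa> :: "nat \<Rightarrow> nat" and phi :: "nat \<Rightarrow> nat \<Rightarrow> 'a \<Rightarrow> real"
    and p :: "nat \<times> nat \<Rightarrow> 'a measure"
  assumes M_le_N: "M \<le> N"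
    and clopen: "\<forall>i\<in>{1..N}. compact (S i) \<and> open (S i)"
    and disjoint: "\<forall>i\<in>{1..N}. \<forall>j\<in>{1..N}. i \<noteq> j \<longrightarrow> S i \<inter> S j = {}"
    and cover: "(\<Union>i\<in>{1..N}. S i) = UNIV"
    and feller: "\<forall>i\<in>{1..N}. feller_resolvent (S i) (R i)"
    and phi_Cfun: "\<forall>(i, j)\<in>IJ M \<kappa>. phi i j \<in> Cfun (S i)"
    and phi_excessive: "\<forall>(i, j)\<in>IJ M \<kappa>. \<forall>t>0. \<forall>x. t * R i t (phi i j) x \<le> phi i j x"
    and phi_partition: "\<forall>i\<in>{1..M}. \<forall>x. (\<Sum>j\<in>{1..\<kappa> i}. phi i j x) = indicator (S i) x"
    and p_subprob: "\<forall>ij\<in>IJ M \<kappa>. subprob_space (p ij) \<and> sets (p ij) = sets borel"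
begin

abbreviation I where "I \<equiv> IJ M \<kappa>"
abbreviation exit_law where "exit_law kl t \<equiv> ell R phi (fst kl) (snd kl) t"
abbreviation R\<^sub>d\<^sub>u where "R\<^sub>d\<^sub>u \<equiv> Rdu S N R"
abbreviation R\<^sub>c\<^sub>o where "R\<^sub>c\<^sub>o \<equiv> Rco S N M \<kappa> R phi p"
abbreviation u where "u \<equiv> uvec S N M \<kappa> R phi p"
abbreviation v where "v \<equiv> vvec S N M \<kappa> R p"

definition N_coeff :: "real \<Rightarrow> nat \<times> nat \<Rightarrow> nat \<times> nat \<Rightarrow> real" where
  "N_coeff t ij kl = integral\<^sup>L (p ij) (exit_law kl t)"

lemma finite_I: "finite I"
  unfolding IJ_def by simp

lemma fst_I: "kl \<in> I \<Longrightarrow> fst kl \<in> {1..N}"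
  using M_le_N by (auto simp: IJ_def)

lemma open_piece: "i \<in> {1..N} \<Longrightarrow> open (S i)"
  using clopen by blast

lemma closed_piece: "i \<in> {1..N} \<Longrightarrow> closed (S i)"
  using clopen compact_imp_closed by blast

lemma compact_UNIV: "compact (UNIV :: 'a set)"
  using clopen cover by (metis compact_UN finite_atLeastAtMost)

lemma feller_piece: "i \<in> {1..N} \<Longrightarrow> feller_resolvent (S i) (R i)"
  using feller by blast

lemma continuous_on_UNIV_piece: "i \<in> {1..N} \<Longrightarrow> g \<in> Cfun (S i) \<Longrightarrow> continuous_on UNIV g"
  using Cfun_continuous_on_UNIV open_piece closed_piece by blast

lemma exit_law_Cfun: "kl \<in> I \<Longrightarrow> t > 0 \<Longrightarrow> exit_law kl t \<in> Cfun (S (fst kl))"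
  using phi_Cfun feller_resolvent_Cfun[OF feller_piece[OF fst_I]]
    Cfun_lincomb[of "phi (fst kl) (snd kl)" _ "R (fst kl) t (phi (fst kl) (snd kl))" 1 "- t"]
  by (cases kl) (auto simp: ell_def)

lemma exit_law_nonneg: "kl \<in> I \<Longrightarrow> t > 0 \<Longrightarrow> 0 \<le> exit_law kl t x"
  using phi_excessive by (cases kl) (auto simp: ell_def)

lemma continuous_exit_law: "kl \<in> I \<Longrightarrow> t > 0 \<Longrightarrow> continuous_on UNIV (exit_law kl t)"
  by (rule continuous_on_UNIV_piece[OF fst_I exit_law_Cfun])

lemma integrable_continuous:
  fixes h :: "'a \<Rightarrow> real"
  assumes "ij \<in> I" and "continuous_on UNIV h"
  shows "integrable (p ij) h"
proof -
  have finite: "finite_measure (p ij)" and sets: "sets (p ij) = sets borel"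
    using p_subprob \<open>ij \<in> I\<close> by (auto simp: subprob_space_def)
  obtain B where "\<forall>x. norm (h x) \<le> B"
    using compact_imp_bounded[OF compact_continuous_image[OF assms(2) compact_UNIV]]
    by (auto simp: bounded_iff)
  then have "AE x in p ij. norm (h x) \<le> B" by simp
  moreover have "h \<in> borel_measurable (p ij)"
    using borel_measurable_continuous_onI[OF assms(2)] by (simp add: measurable_cong_sets[OF sets refl])
  ultimately show ?thesis
    by (rule finite_measure.integrable_const_bound[OF finite])
qed

lemma Nop_eq_N_coeff:
  assumes "t > 0"
  shows "Nop S M \<kappa> R phi p t w ij = (\<Sum>kl\<in>I. w kl * N_coeff t ij kl)"
proof -
  have "set_lebesgue_integral (p ij) (S (fst kl)) (exit_law kl t) = N_coeff t ij kl" if "kl \<in> I" for kl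
    using Cfun_vanishes_outside[OF exit_law_Cfun[OF that \<open>t > 0\<close>]]
    unfolding set_lebesgue_integral_def N_coeff_def
    by (intro Bochner_Integration.integral_cong) (auto simp: indicator_def)
  then show ?thesis
    unfolding Nop_def by simp
qed

lemma notin_other_piece:
  "i \<in> {1..N} \<Longrightarrow> k \<in> {1..N} \<Longrightarrow> x \<in> S i \<Longrightarrow> k \<noteq> i \<Longrightarrow> x \<notin> S k"
  using disjoint by blast

lemma exit_law_outside: "kl \<in> I \<Longrightarrow> t > 0 \<Longrightarrow> x \<notin> S (fst kl) \<Longrightarrow> exit_law kl t x = 0"
  by (rule Cfun_vanishes_outside[OF exit_law_Cfun])

lemma sum_exit_laws_piece:
  assumes "i \<in> {1..M}" and "t > 0"
  shows "(\<Sum>l\<in>{1..\<kappa> i}. ell R phi i l t x) = indicator (S i) x - t * R i t (indicator (S i)) x"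
proof -
  have i: "i \<in> {1..N}" using assms(1) M_le_N by simp
  have "indicator (S i) = (\<lambda>y. \<Sum>l\<in>{1..\<kappa> i}. 1 * phi i l y)"
    using phi_partition assms(1) by (simp add: fun_eq_iff)
  moreover have "\<forall>l\<in>{1..\<kappa> i}. phi i l \<in> Cfun (S i)"
    using phi_Cfun assms(1) by (auto simp: IJ_def)
  ultimately have "R i t (indicator (S i)) x = (\<Sum>l\<in>{1..\<kappa> i}. R i t (phi i l) x)"
    using feller_resolvent_sum[OF feller_piece[OF i] \<open>t > 0\<close>, of "{1..\<kappa> i}" "phi i" "\<lambda>_. 1"]
    by simp
  then show ?thesis
    using phi_partition assms(1) by (simp add: ell_def sum_subtractf sum_distrib_left)
qed

lemma sum_exit_laws_less_1:
  assumes "t > 0"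
  shows "(\<Sum>kl\<in>I. exit_law kl t x) < 1"
proof -
  obtain i where i: "i \<in> {1..N}" "x \<in> S i"
    using cover by blast
  have "(\<Sum>kl\<in>I. exit_law kl t x) = (\<Sum>kl\<in>{kl\<in>I. fst kl = i}. exit_law kl t x)"
    using exit_law_outside[OF _ \<open>t > 0\<close>] notin_other_piece[OF i(1) fst_I i(2)]
    by (intro sum.mono_neutral_right[OF finite_I]) auto
  also have "\<dots> < 1"
  proof (cases "i \<in> {1..M}")
    case True
    have "{kl\<in>I. fst kl = i} = Pair i ` {1..\<kappa> i}"
      using True by (auto simp: IJ_def)
    then have "(\<Sum>kl\<in>{kl\<in>I. fst kl = i}. exit_law kl t x) = (\<Sum>l\<in>{1..\<kappa> i}. ell R phi i l t x)"
      by (simp add: sum.reindex inj_on_def)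
    also have "\<dots> = 1 - t * R i t (indicator (S i)) x"
      using sum_exit_laws_piece[OF True \<open>t > 0\<close>] i(2) by simp
    finally show ?thesis
      using feller_resolvent_indicator_pos[OF feller_piece[OF i(1)] i(2) \<open>t > 0\<close>] \<open>t > 0\<close> by simp
  next
    case False
    then have "{kl\<in>I. fst kl = i} = {}"
      by (auto simp: IJ_def)
    then show ?thesis by (simp only: sum.empty)
  qed
  finally show ?thesis .
qed

lemma N_coeff_row_sum_bound:
  assumes "t > 0"
  obtains c where "0 \<le> c" and "c < 1" and "\<forall>ij\<in>I. (\<Sum>kl\<in>I. \<bar>N_coeff t ij kl\<bar>) \<le> c"
proof -
  define h where "h x = (\<Sum>kl\<in>I. exit_law kl t x)" for x
  have h_cont: "continuous_on UNIV h"
    unfolding h_def using continuous_exit_law \<open>t > 0\<close> by (intro continuous_on_sum) auto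
  obtain x0 where x0: "\<forall>x. h x \<le> h x0"
    using continuous_attains_sup[OF compact_UNIV _ h_cont] by auto
  have "(\<Sum>kl\<in>I. \<bar>N_coeff t ij kl\<bar>) \<le> h x0" if "ij \<in> I" for ij
  proof -
    have "(\<Sum>kl\<in>I. \<bar>N_coeff t ij kl\<bar>) = (\<Sum>kl\<in>I. N_coeff t ij kl)"
      unfolding N_coeff_def using exit_law_nonneg \<open>t > 0\<close> by (intro sum.cong) auto
    also have "\<dots> = integral\<^sup>L (p ij) h"
      unfolding N_coeff_def h_def using integrable_continuous[OF that] continuous_exit_law \<open>t > 0\<close>
      by (intro Bochner_Integration.integral_sum[symmetric]) auto
    also have "\<dots> \<le> integral\<^sup>L (p ij) (\<lambda>_. h x0)"
      using x0 integrable_continuous[OF that] h_cont by (intro integral_mono) auto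
    also have "\<dots> = measure (p ij) (space (p ij)) * h x0"
      by simp
    also have "\<dots> \<le> h x0"
      using subprob_space.subprob_measure_le_1[of "p ij"] p_subprob that
        exit_law_nonneg[OF _ \<open>t > 0\<close>] sum_nonneg[of I "\<lambda>kl. exit_law kl t x0"]
      by (intro mult_left_le_one_le) (auto simp: h_def)
    finally show ?thesis .
  qed
  moreover have "0 \<le> h x0"
    unfolding h_def using exit_law_nonneg \<open>t > 0\<close> by (intro sum_nonneg) auto
  ultimately show ?thesis
    using that sum_exit_laws_less_1[OF \<open>t > 0\<close>] by (auto simp: h_def)
qed

lemma uvec_solves:
  assumes "t > 0"
  shows "\<forall>ij\<in>I. u g t ij - (\<Sum>kl\<in>I. u g t kl * N_coeff t ij kl) = v g t ij"
proof -
  obtain c where c: "0 \<le> c" "c < 1" "\<forall>ij\<in>I. (\<Sum>kl\<in>I. \<bar>N_coeff t ij kl\<bar>) \<le> c"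
    using N_coeff_row_sum_bound[OF \<open>t > 0\<close>] by blast
  let ?solves = "\<lambda>w. \<forall>ij\<in>I. w ij - (\<Sum>kl\<in>I. w kl * N_coeff t ij kl) = v g t ij"
  obtain w where "?solves w"
    using contraction_system_solvable[OF finite_I c] by blast
  then have "?solves (restrict w I)"
    by simp
  moreover have "y = restrict w I" if "y \<in> extensional I" and "?solves y" for y
  proof -
    have "restrict y I = restrict w I"
      using contraction_system_unique[OF finite_I c(2,3) \<open>?solves y\<close> \<open>?solves (restrict w I)\<close>]
      by (intro restrict_ext) simp
    then show ?thesis
      using extensional_restrict[OF \<open>y \<in> extensional I\<close>] by simp
  qed
  ultimately have "\<exists>!w. w \<in> extensional I \<and> ?solves w"
    by (intro ex1I[of _ "restrict w I"]) auto
  from theI'[OF this] show ?thesis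
    unfolding uvec_def Nop_eq_N_coeff[OF \<open>t > 0\<close>] by blast
qed

lemma N_system_unique:
  assumes "t > 0" and "ij \<in> I"
    and "\<forall>ij\<in>I. w ij - (\<Sum>kl\<in>I. w kl * N_coeff t ij kl) = V ij"
    and "\<forall>ij\<in>I. w' ij - (\<Sum>kl\<in>I. w' kl * N_coeff t ij kl) = V ij"
  shows "w ij = w' ij"
proof -
  obtain c where c: "0 \<le> c" "c < 1" "\<forall>ij\<in>I. (\<Sum>kl\<in>I. \<bar>N_coeff t ij kl\<bar>) \<le> c"
    using N_coeff_row_sum_bound[OF \<open>t > 0\<close>] by blast
  show ?thesis
    by (rule contraction_system_unique[OF finite_I c(2,3) assms(3,4,2)])
qed

lemma restr_piece_Cfun:
  assumes "i \<in> {1..N}" and "k \<in> {1..N}" and "g \<in> Cfun (S k)"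
  shows "restr (S i) g = (if i = k then g else (\<lambda>_. 0))"
  using restr_Cfun[OF assms(3)] restr_Cfun_disjoint[OF assms(3)] disjoint assms(1,2) by auto

lemma resolvent_restr_Cfun:
  "i \<in> {1..N} \<Longrightarrow> t > 0 \<Longrightarrow> continuous_on UNIV g \<Longrightarrow> R i t (restr (S i) g) \<in> Cfun (S i)"
  using feller_resolvent_Cfun[OF feller_piece] Cfun_restr continuous_on_subset by blast

lemma continuous_Rdu:
  assumes "t > 0" and "continuous_on UNIV g"
  shows "continuous_on UNIV (R\<^sub>d\<^sub>u t g)"
proof -
  have "continuous_on UNIV (R i t (restr (S i) g))" if "i \<in> {1..N}" for i
    using continuous_on_UNIV_piece[OF that resolvent_restr_Cfun[OF that assms]] .
  then show ?thesis
    unfolding Rdu_def by (intro continuous_on_sum) auto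
qed

lemma Rdu_Cfun_piece:
  assumes "k \<in> {1..N}" and "t > 0" and "g \<in> Cfun (S k)"
  shows "R\<^sub>d\<^sub>u t g = R k t g"
proof
  fix x
  have "R i t (restr (S i) g) x = (if i = k then R k t g x else 0)" if "i \<in> {1..N}" for i
    using restr_piece_Cfun[OF that assms(1,3)] feller_resolvent_zero[OF feller_piece[OF that] \<open>t > 0\<close>]
    by simp
  then have "R\<^sub>d\<^sub>u t g x = (\<Sum>i\<in>{1..N}. if i = k then R k t g x else 0)"
    unfolding Rdu_def by (intro sum.cong) auto
  then show "R\<^sub>d\<^sub>u t g x = R k t g x"
    using \<open>k \<in> {1..N}\<close> by simp
qed

lemma restr_Rdu:
  assumes "i \<in> {1..N}" and "t > 0" and "continuous_on UNIV g"
  shows "restr (S i) (R\<^sub>d\<^sub>u t g) = R i t (restr (S i) g)"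
proof
  fix x
  have "restr (S i) (R k t (restr (S k) g)) x = (if k = i then R i t (restr (S i) g) x else 0)"
    if "k \<in> {1..N}" for k
    using restr_piece_Cfun[OF assms(1) that resolvent_restr_Cfun[OF that assms(2,3)]] by auto
  then have "restr (S i) (R\<^sub>d\<^sub>u t g) x = (\<Sum>k\<in>{1..N}. if k = i then R i t (restr (S i) g) x else 0)"
    unfolding Rdu_def restr_sum by (intro sum.cong) auto
  then show "restr (S i) (R\<^sub>d\<^sub>u t g) x = R i t (restr (S i) g) x"
    using \<open>i \<in> {1..N}\<close> by simp
qed

lemma Rdu_add:
  assumes "t > 0" and "continuous_on UNIV g" and "continuous_on UNIV h"
  shows "R\<^sub>d\<^sub>u t (\<lambda>x. g x + h x) = (\<lambda>x. R\<^sub>d\<^sub>u t g x + R\<^sub>d\<^sub>u t h x)"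
proof -
  have "R i t (restr (S i) (\<lambda>x. g x + h x)) = (\<lambda>x. R i t (restr (S i) g) x + R i t (restr (S i) h) x)"
    if "i \<in> {1..N}" for i
    using feller_resolvent_lincomb[OF feller_piece[OF that] \<open>t > 0\<close>
        Cfun_restr[OF continuous_on_subset[OF assms(2)]] Cfun_restr[OF continuous_on_subset[OF assms(3)]], of 1 1]
    by (simp add: restr_add)
  then show ?thesis
    unfolding Rdu_def by (simp add: sum.distrib)
qed

lemma Rdu_sum:
  assumes "t > 0" and "finite A" and "\<forall>a\<in>A. continuous_on UNIV (h a)"
  shows "R\<^sub>d\<^sub>u t (\<lambda>x. \<Sum>a\<in>A. c a * h a x) = (\<lambda>x. \<Sum>a\<in>A. c a * R\<^sub>d\<^sub>u t (h a) x)"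
proof -
  have "R i t (restr (S i) (\<lambda>x. \<Sum>a\<in>A. c a * h a x)) = (\<lambda>x. \<Sum>a\<in>A. c a * R i t (restr (S i) (h a)) x)"
    if "i \<in> {1..N}" for i
  proof -
    have "\<forall>a\<in>A. restr (S i) (h a) \<in> Cfun (S i)"
      using assms(3) Cfun_restr continuous_on_subset[OF _ subset_UNIV] by blast
    then show ?thesis
      using feller_resolvent_sum[OF feller_piece[OF that] \<open>t > 0\<close> \<open>finite A\<close>]
      by (simp add: restr_sum restr_mult)
  qed
  then show ?thesis
    unfolding Rdu_def by (simp add: sum_distrib_left sum.swap[of _ A])
qed

lemma Rdu_resolvent_equation:
  assumes "t > 0" and "s > 0" and "continuous_on UNIV f"
  shows "(t - s) * R\<^sub>d\<^sub>u s (R\<^sub>d\<^sub>u t f) x = R\<^sub>d\<^sub>u s f x - R\<^sub>d\<^sub>u t f x"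
proof -
  have "(t - s) * R i s (R i t (restr (S i) f)) x = R i s (restr (S i) f) x - R i t (restr (S i) f) x"
    if "i \<in> {1..N}" for i
    using feller_resolvent_equation[OF feller_piece[OF that] \<open>s > 0\<close> \<open>t > 0\<close>
        Cfun_restr[OF continuous_on_subset[OF assms(3)]], of x]
    by simp
  moreover have "R\<^sub>d\<^sub>u s (R\<^sub>d\<^sub>u t f) x = (\<Sum>i\<in>{1..N}. R i s (R i t (restr (S i) f)) x)"
    unfolding Rdu_def[of S N R s] using restr_Rdu[OF _ \<open>t > 0\<close> assms(3)] by (intro sum.cong) auto
  ultimately show ?thesis
    unfolding Rdu_def[of S N R s f] Rdu_def[of S N R t f] by (simp add: sum_distrib_left sum_subtractf)
qed

lemma Rdu_exit_law_resolvent: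
  assumes "kl \<in> I" and "t > 0" and "s > 0"
  shows "(t - s) * R\<^sub>d\<^sub>u s (exit_law kl t) x = exit_law kl s x - exit_law kl t x"
proof -
  have "phi (fst kl) (snd kl) \<in> Cfun (S (fst kl))"
    using phi_Cfun \<open>kl \<in> I\<close> by (cases kl) auto
  then show ?thesis
    using Rdu_Cfun_piece[OF fst_I[OF \<open>kl \<in> I\<close>] \<open>s > 0\<close> exit_law_Cfun[OF \<open>kl \<in> I\<close> \<open>t > 0\<close>]]
      feller_resolvent_exit_law[OF feller_piece[OF fst_I[OF \<open>kl \<in> I\<close>]] \<open>t > 0\<close> \<open>s > 0\<close>]
    by (simp add: ell_def)
qed

lemma Rdu_Rco_resolvent:
  assumes "t > 0" and "s > 0" and "continuous_on UNIV f"
  shows "(t - s) * R\<^sub>d\<^sub>u s (R\<^sub>c\<^sub>o t f) x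
    = R\<^sub>d\<^sub>u s f x - R\<^sub>d\<^sub>u t f x + (\<Sum>kl\<in>I. u f t kl * (exit_law kl s x - exit_law kl t x))"
proof -
  have cont: "continuous_on UNIV (\<lambda>x. \<Sum>kl\<in>I. u f t kl * exit_law kl t x)"
    using continuous_exit_law \<open>t > 0\<close> by (intro continuous_on_sum continuous_on_mult_left) auto
  have "R\<^sub>d\<^sub>u s (R\<^sub>c\<^sub>o t f) x
      = R\<^sub>d\<^sub>u s (R\<^sub>d\<^sub>u t f) x + (\<Sum>kl\<in>I. u f t kl * R\<^sub>d\<^sub>u s (exit_law kl t) x)"
    unfolding Rco_def
    using Rdu_add[OF \<open>s > 0\<close> continuous_Rdu[OF \<open>t > 0\<close> assms(3)] cont]
      Rdu_sum[OF \<open>s > 0\<close> finite_I, of "\<lambda>kl. exit_law kl t" "u f t"] continuous_exit_law \<open>t > 0\<close>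
    by simp
  moreover have "(t - s) * (\<Sum>kl\<in>I. u f t kl * R\<^sub>d\<^sub>u s (exit_law kl t) x)
      = (\<Sum>kl\<in>I. u f t kl * (exit_law kl s x - exit_law kl t x))"
    unfolding sum_distrib_left
  proof (rule sum.cong[OF refl])
    fix kl assume "kl \<in> I"
    have "(t - s) * (u f t kl * R\<^sub>d\<^sub>u s (exit_law kl t) x) = u f t kl * ((t - s) * R\<^sub>d\<^sub>u s (exit_law kl t) x)"
      by (simp only: mult.left_commute)
    then show "(t - s) * (u f t kl * R\<^sub>d\<^sub>u s (exit_law kl t) x) = u f t kl * (exit_law kl s x - exit_law kl t x)"
      by (simp only: Rdu_exit_law_resolvent[OF \<open>kl \<in> I\<close> \<open>t > 0\<close> \<open>s > 0\<close>])
  qed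
  ultimately show ?thesis
    using Rdu_resolvent_equation[OF assms, of x] by (simp add: distrib_left)
qed

lemma vvec_Rco_resolvent:
  assumes "t > 0" and "s > 0" and "continuous_on UNIV f" and "ij \<in> I"
  shows "(t - s) * v (R\<^sub>c\<^sub>o t f) s ij
    = v f s ij - v f t ij + (\<Sum>kl\<in>I. u f t kl * (N_coeff s ij kl - N_coeff t ij kl))"
proof -
  let ?\<Delta> = "\<lambda>kl x. exit_law kl s x - exit_law kl t x"
  have int_Rdu: "integrable (p ij) (R\<^sub>d\<^sub>u r f)" if "r > 0" for r
    using integrable_continuous[OF \<open>ij \<in> I\<close> continuous_Rdu[OF that assms(3)]] .
  have int_exit: "integrable (p ij) (exit_law kl r)" if "kl \<in> I" "r > 0" for kl r
    using integrable_continuous[OF \<open>ij \<in> I\<close> continuous_exit_law[OF that]] .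
  have int_\<Delta>: "integrable (p ij) (\<lambda>x. u f t kl * ?\<Delta> kl x)" if "kl \<in> I" for kl
    using int_exit[OF that \<open>s > 0\<close>] int_exit[OF that \<open>t > 0\<close>] by simp
  have "(t - s) * v (R\<^sub>c\<^sub>o t f) s ij = integral\<^sup>L (p ij) (\<lambda>x. (t - s) * R\<^sub>d\<^sub>u s (R\<^sub>c\<^sub>o t f) x)"
    unfolding vvec_def by simp
  also have "\<dots> = integral\<^sup>L (p ij)
      (\<lambda>x. (R\<^sub>d\<^sub>u s f x - R\<^sub>d\<^sub>u t f x) + (\<Sum>kl\<in>I. u f t kl * ?\<Delta> kl x))"
    using Rdu_Rco_resolvent[OF assms(1-3)] by simp
  also have "\<dots> = (v f s ij - v f t ij) + (\<Sum>kl\<in>I. integral\<^sup>L (p ij) (\<lambda>x. u f t kl * ?\<Delta> kl x))"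
    unfolding vvec_def using int_Rdu[OF \<open>s > 0\<close>] int_Rdu[OF \<open>t > 0\<close>] int_\<Delta>
    by (simp add: Bochner_Integration.integral_add Bochner_Integration.integral_diff
        Bochner_Integration.integral_sum)
  also have "(\<Sum>kl\<in>I. integral\<^sup>L (p ij) (\<lambda>x. u f t kl * ?\<Delta> kl x))
      = (\<Sum>kl\<in>I. u f t kl * (N_coeff s ij kl - N_coeff t ij kl))"
    unfolding N_coeff_def using int_exit \<open>s > 0\<close> \<open>t > 0\<close>
    by (intro sum.cong) (simp_all add: Bochner_Integration.integral_diff)
  finally show ?thesis .
qed

lemma uvec_Rco_resolvent:
  assumes "t > 0" and "s > 0" and "continuous_on UNIV f" and "ij \<in> I"
  shows "(t - s) * u (R\<^sub>c\<^sub>o t f) s ij = u f s ij - u f t ij"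
proof -
  let ?V = "\<lambda>ij. (t - s) * v (R\<^sub>c\<^sub>o t f) s ij"
  have "\<forall>ij\<in>I. (t - s) * u (R\<^sub>c\<^sub>o t f) s ij
      - (\<Sum>kl\<in>I. (t - s) * u (R\<^sub>c\<^sub>o t f) s kl * N_coeff s ij kl) = ?V ij"
  proof
    fix ij assume "ij \<in> I"
    have "(t - s) * u (R\<^sub>c\<^sub>o t f) s ij - (\<Sum>kl\<in>I. (t - s) * u (R\<^sub>c\<^sub>o t f) s kl * N_coeff s ij kl)
        = (t - s) * (u (R\<^sub>c\<^sub>o t f) s ij - (\<Sum>kl\<in>I. u (R\<^sub>c\<^sub>o t f) s kl * N_coeff s ij kl))"
      by (simp add: right_diff_distrib sum_distrib_left mult.assoc)
    also have "\<dots> = ?V ij"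
      using uvec_solves[OF \<open>s > 0\<close>, of "R\<^sub>c\<^sub>o t f", rule_format, OF \<open>ij \<in> I\<close>] by simp
    finally show "(t - s) * u (R\<^sub>c\<^sub>o t f) s ij
      - (\<Sum>kl\<in>I. (t - s) * u (R\<^sub>c\<^sub>o t f) s kl * N_coeff s ij kl) = ?V ij" .
  qed
  moreover have "\<forall>ij\<in>I. (u f s ij - u f t ij) - (\<Sum>kl\<in>I. (u f s kl - u f t kl) * N_coeff s ij kl) = ?V ij"
  proof
    fix ij assume "ij \<in> I"
    show "(u f s ij - u f t ij) - (\<Sum>kl\<in>I. (u f s kl - u f t kl) * N_coeff s ij kl) = ?V ij"
      using uvec_solves[OF \<open>s > 0\<close>, of f, rule_format, OF \<open>ij \<in> I\<close>]
        uvec_solves[OF \<open>t > 0\<close>, of f, rule_format, OF \<open>ij \<in> I\<close>]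
        vvec_Rco_resolvent[OF assms(1-3) \<open>ij \<in> I\<close>]
      unfolding left_diff_distrib right_diff_distrib sum_subtractf by linarith
  qed
  ultimately show ?thesis
    by (rule N_system_unique[OF \<open>s > 0\<close> \<open>ij \<in> I\<close>])
qed

end

theorem lemma2:
  fixes S :: "nat \<Rightarrow> 'a::metric_space set"
    and N M :: nat
    and R :: "nat \<Rightarrow> real \<Rightarrow> ('a \<Rightarrow> real) \<Rightarrow> 'a \<Rightarrow> real"
    and \<kappa> :: "nat \<Rightarrow> nat"
    and phi :: "nat \<Rightarrow> nat \<Rightarrow> 'a \<Rightarrow> real"
    and p :: "nat \<times> nat \<Rightarrow> 'a measure"
    and lam mu :: real
    and f :: "'a \<Rightarrow> real"
  assumes "1 \<le> M" and "M \<le> N"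
    and "\<forall>i\<in>{1..N}. compact (S i) \<and> open (S i)"
    and "\<forall>i\<in>{1..N}. \<forall>j\<in>{1..N}. i \<noteq> j \<longrightarrow> S i \<inter> S j = {}"
    and "(\<Union>i\<in>{1..N}. S i) = UNIV"
    and "\<forall>i\<in>{1..N}. feller_resolvent (S i) (R i)"
    and "\<forall>i\<in>{1..M}. \<not> conservative (S i) (R i)"
    and "\<forall>i\<in>{M+1..N}. conservative (S i) (R i)"
    and "\<forall>i\<in>{1..M}. trivial_kernel (S i) (R i)"
    and "\<forall>(i, j)\<in>IJ M \<kappa>. phi i j \<in> Cfun (S i) \<and> (\<forall>x. 0 \<le> phi i j x \<and> phi i j x \<le> indicator (S i) x)"
    and "\<forall>(i, j)\<in>IJ M \<kappa>. \<forall>t>0. \<forall>x. t * R i t (phi i j) x \<le> phi i j x"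
    and "\<forall>(i, j)\<in>IJ M \<kappa>. \<forall>t>0. (\<lambda>x. t * R i t (phi i j) x) \<noteq> phi i j"
    and "\<forall>i\<in>{1..M}. \<forall>x. (\<Sum>j\<in>{1..\<kappa> i}. phi i j x) = indicator (S i) x"
    and "\<forall>ij\<in>IJ M \<kappa>. subprob_space (p ij) \<and> sets (p ij) = sets borel"
    and "lam > 0" and "mu > 0"
    and "continuous_on UNIV f"
  shows "\<forall>ij\<in>IJ M \<kappa>.
           (lam - mu) * uvec S N M \<kappa> R phi p (Rco S N M \<kappa> R phi p lam f) mu ij
             = uvec S N M \<kappa> R phi p f mu ij - uvec S N M \<kappa> R phi p f lam ij"
proof -
  (* Not needed: 1 <= M, the (non)conservativity and trivial-kernel hypotheses, the bounds on phi
     and lam R_lam phi ~= phi; the contraction property of N_lam only uses R_lam 1 > 0. *)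
  interpret resolvent_concatenation S N M R \<kappa> phi p
    using assms(2-6,10,11,13,14) by unfold_locales auto
  show ?thesis
    using uvec_Rco_resolvent[OF assms(15-17)] by blast
qed

end
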